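(* Let $l\ge3$ be an odd integer and let $(A,M)$ be any NIM-rep of the fusion ring $\mathrm{Gr}((A_1,l)_{\frac12})$. Then $(V_{l-1}\vartriangleright m_p,m_q)\le1$ for all $m_p,m_q\in M$.
   Context: For odd $l\ge3$, $\mathrm{Gr}((A_1,l)_{\frac12})$ is the commutative fusion ring with basis $\{V_0,V_2,V_4,\dots,V_{l-1}\}$ (unit $V_0$, every basis element self-dual) and multiplication $V_iV_j=\sum_k V_k$, the sum over all $k$ with $|i-j|\le k\le\min(i+j,2l-i-j)$ and $k\equiv i+j \pmod 2$. A NIM-rep of a fusion ring $(R,B)$ is a nonzero left $R$-module $A$, free over $\mathbb{Z}$ with a fixed basis $M$, such that each $b\vartriangleright m$ is a non-negative integer combination of elements of $M$ and $(b\vartriangleright m,m')=(m,b^*\vartriangleright m')$ for the symmetric bilinear form $(-,-)$ making $M$ orthonormal. *)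

theory Defs
  imports Main
begin

text \<open>Basis of Gr((A_1,l)_{1/2}), l odd: V_i for the indices i in {0,2,...,l-1}.\<close>
definition half_idx :: "nat \<Rightarrow> nat set" where
  "half_idx l = {i. even i \<and> i \<le> l - 1}"

text \<open>Structure constant: V_i V_j = sum of V_k with |i-j| <= k <= min(i+j, 2l-i-j), k = i+j mod 2.\<close>
definition half_fus :: "nat \<Rightarrow> nat \<Rightarrow> nat \<Rightarrow> nat \<Rightarrow> nat" where
  "half_fus l i j k =
     (if \<bar>int i - int j\<bar> \<le> int k \<and> int k \<le> min (int i + int j) (2 * int l - int i - int j)
         \<and> even (i + j + k) then 1 else 0)"

text \<open>A NIM-rep with basis M: N i m m' is the coefficient (V_i |> m, m') of m' in V_i |> m.
  Conditions: M nonempty; each V_i |> m is a finite non-negative integer combination of M;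
  V_0 acts as the identity; module axiom V_i |> (V_j |> m) = (V_i V_j) |> m;
  adjointness (V_i |> m, m') = (m, V_i^* |> m') with V_i^* = V_i.\<close>
definition half_nim_rep :: "nat \<Rightarrow> 'm set \<Rightarrow> (nat \<Rightarrow> 'm \<Rightarrow> 'm \<Rightarrow> nat) \<Rightarrow> bool" where
  "half_nim_rep l M N \<longleftrightarrow>
     M \<noteq> {} \<and>
     (\<forall>i\<in>half_idx l. \<forall>m\<in>M. finite {m'\<in>M. N i m m' \<noteq> 0}) \<and>
     (\<forall>m\<in>M. \<forall>m'\<in>M. N 0 m m' = (if m = m' then 1 else 0)) \<and>
     (\<forall>i\<in>half_idx l. \<forall>j\<in>half_idx l. \<forall>m\<in>M. \<forall>m'\<in>M.
        (\<Sum>m''\<in>{x\<in>M. N j m x \<noteq> 0}. N j m m'' * N i m'' m')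
          = (\<Sum>k\<in>half_idx l. half_fus l i j k * N k m m')) \<and>
     (\<forall>i\<in>half_idx l. \<forall>m\<in>M. \<forall>m'\<in>M. N i m m' = N i m' m)"

end

theory Submission
  imports Defs
begin

text \<open>Write \<open>X = V_(l-1)\<close>. Its products are \<open>X V_k = V_(l-1-k) + V_(l+1-k)\<close>, the second
  term present only for \<open>k \<ge> 2\<close>. The weight \<open>w j = (j + 1) (l + 1 - j)\<close> is a quadratic with
  second difference \<open>-2\<close> that is symmetric under \<open>j \<mapsto> l - j\<close>, so \<open>v = \<Sum>_j w j V_j \<rhd> p\<close>
  satisfies \<open>X \<rhd> v = 2 v - 2 \<Sum>_k V_k \<rhd> p\<close>: every coordinate of \<open>X \<rhd> v\<close> is at most the
  corresponding one of \<open>2 v\<close>, and at \<open>p\<close> (where \<open>V_0 \<rhd> p = p\<close> contributes) at least \<open>2\<close> less.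
  If \<open>(X \<rhd> p, q) \<ge> 2\<close>, then by symmetry also \<open>(X \<rhd> q, p) \<ge> 2\<close>, and
  \<open>2 v(q) + 2 \<le> (X \<rhd> v)(p) + 2 \<le> 2 v(p) \<le> (X \<rhd> v)(q) \<le> 2 v(q)\<close>, a contradiction.\<close>

lemma finite_half_idx: "finite (half_idx l)"
  unfolding half_idx_def by auto

lemma zero_in_half_idx: "0 \<in> half_idx l"
  unfolding half_idx_def by auto

lemma top_in_half_idx: "odd l \<Longrightarrow> l - 1 \<in> half_idx l"
  unfolding half_idx_def by auto

lemma half_fus_top:
  assumes "odd l" "j \<in> half_idx l" "k \<in> half_idx l"
  shows "half_fus l (l - 1) j k = (if k + j = l - 1 \<or> k + j = l + 1 then 1 else 0)"
proof -
  obtain a where a: "j = 2 * a" "j \<le> l - 1" using assms(2) unfolding half_idx_def by auto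
  obtain b where b: "k = 2 * b" "k \<le> l - 1" using assms(3) unfolding half_idx_def by auto
  obtain c where c: "l = 2 * c + 1" using assms(1) oddE by blast
  have "even (l - 1 + j + k)" using a b c by simp
  moreover have "(\<bar>int (l - 1) - int j\<bar> \<le> int k
        \<and> int k \<le> min (int (l - 1) + int j) (2 * int l - int (l - 1) - int j))
      \<longleftrightarrow> (k + j = l - 1 \<or> k + j = l + 1)"
    using a b unfolding c by (simp add: abs_if) arith
  ultimately show ?thesis unfolding half_fus_def by auto
qed

definition half_weight :: "nat \<Rightarrow> nat \<Rightarrow> nat" where
  "half_weight l j = (j + 1) * (l + 1 - j)"

lemma half_weight_top_fus:
  assumes "odd l" "k \<in> half_idx l"
  shows "(\<Sum>j\<in>half_idx l. half_weight l j * half_fus l (l - 1) j k) + 2 = 2 * half_weight l k"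
proof -
  have k: "even k" "k \<le> l - 1" using assms(2) unfolding half_idx_def by auto
  have low: "l - 1 - k \<in> half_idx l" using k assms(1) unfolding half_idx_def by auto
  have high: "2 \<le> k \<Longrightarrow> l + 1 - k \<in> half_idx l" using k assms(1) unfolding half_idx_def by auto
  have "(\<Sum>j\<in>half_idx l. half_weight l j * half_fus l (l - 1) j k)
      = (\<Sum>j\<in>half_idx l. (if j = l - 1 - k then half_weight l j else 0)
                          + (if j = l + 1 - k \<and> 2 \<le> k then half_weight l j else 0))"
  proof (intro sum.cong refl)
    fix j assume j: "j \<in> half_idx l"
    then have "j \<le> l - 1" unfolding half_idx_def by auto
    with k assms(1) show "half_weight l j * half_fus l (l - 1) j k
        = (if j = l - 1 - k then half_weight l j else 0)
          + (if j = l + 1 - k \<and> 2 \<le> k then half_weight l j else 0)"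
      unfolding half_fus_top[OF assms(1) j assms(2)] by auto
  qed
  also have "\<dots> = half_weight l (l - 1 - k) + (if 2 \<le> k then half_weight l (l + 1 - k) else 0)"
    using low high by (cases "2 \<le> k") (simp_all add: sum.distrib finite_half_idx)
  finally have sum_eq: "(\<Sum>j\<in>half_idx l. half_weight l j * half_fus l (l - 1) j k)
      = half_weight l (l - 1 - k) + (if 2 \<le> k then half_weight l (l + 1 - k) else 0)" .
  define d where "d = l - 1 - k"
  have d: "l = k + 1 + d" using k odd_pos[OF assms(1)] unfolding d_def by linarith
  show ?thesis
  proof (cases "2 \<le> k")
    case True
    then show ?thesis unfolding sum_eq by (simp add: half_weight_def d algebra_simps)
  next
    case False
    with k have "k = 0" by auto
    then show ?thesis unfolding sum_eq by (simp add: half_weight_def d algebra_simps)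
  qed
qed

lemma half_nim_rep_unit:
  "half_nim_rep l M N \<Longrightarrow> m \<in> M \<Longrightarrow> m' \<in> M \<Longrightarrow> N 0 m m' = (if m = m' then 1 else 0)"
  unfolding half_nim_rep_def by blast

lemma half_nim_rep_sym:
  "half_nim_rep l M N \<Longrightarrow> i \<in> half_idx l \<Longrightarrow> m \<in> M \<Longrightarrow> m' \<in> M \<Longrightarrow> N i m m' = N i m' m"
  unfolding half_nim_rep_def by blast

definition half_orbit :: "nat \<Rightarrow> 'm set \<Rightarrow> (nat \<Rightarrow> 'm \<Rightarrow> 'm \<Rightarrow> nat) \<Rightarrow> 'm \<Rightarrow> 'm set" where
  "half_orbit l M N p = {x \<in> M. \<exists>j\<in>half_idx l. N j p x \<noteq> 0}"

lemma finite_half_orbit: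
  assumes "half_nim_rep l M N" "p \<in> M"
  shows "finite (half_orbit l M N p)"
proof -
  have "half_orbit l M N p = (\<Union>j\<in>half_idx l. {x \<in> M. N j p x \<noteq> 0})"
    unfolding half_orbit_def by auto
  then show ?thesis
    using assms finite_half_idx unfolding half_nim_rep_def by auto
qed

lemma half_nim_rep_assoc_orbit:
  assumes "half_nim_rep l M N" "i \<in> half_idx l" "j \<in> half_idx l" "p \<in> M" "m \<in> M"
  shows "(\<Sum>x\<in>half_orbit l M N p. N j p x * N i x m) = (\<Sum>k\<in>half_idx l. half_fus l i j k * N k p m)"
proof -
  have "(\<Sum>x\<in>half_orbit l M N p. N j p x * N i x m) = (\<Sum>x\<in>{x \<in> M. N j p x \<noteq> 0}. N j p x * N i x m)"
    using assms by (intro sum.mono_neutral_right finite_half_orbit) (auto simp: half_orbit_def)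
  also have "\<dots> = (\<Sum>k\<in>half_idx l. half_fus l i j k * N k p m)"
    using assms unfolding half_nim_rep_def by blast
  finally show ?thesis .
qed

lemma half_nim_rep_act_combination:
  assumes "half_nim_rep l M N" "i \<in> half_idx l" "p \<in> M" "m \<in> M"
  shows "(\<Sum>x\<in>half_orbit l M N p. N i m x * (\<Sum>j\<in>half_idx l. c j * N j p x))
       = (\<Sum>k\<in>half_idx l. (\<Sum>j\<in>half_idx l. c j * half_fus l i j k) * N k p m)"
proof -
  have "(\<Sum>x\<in>half_orbit l M N p. N i m x * (\<Sum>j\<in>half_idx l. c j * N j p x))
      = (\<Sum>x\<in>half_orbit l M N p. \<Sum>j\<in>half_idx l. c j * (N j p x * N i x m))"
    using assms half_nim_rep_sym[OF assms(1,2,4)]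
    by (intro sum.cong refl) (auto simp: sum_distrib_left half_orbit_def algebra_simps)
  also have "\<dots> = (\<Sum>j\<in>half_idx l. c j * (\<Sum>x\<in>half_orbit l M N p. N j p x * N i x m))"
    by (subst sum.swap) (simp add: sum_distrib_left)
  also have "\<dots> = (\<Sum>j\<in>half_idx l. \<Sum>k\<in>half_idx l. c j * half_fus l i j k * N k p m)"
    using assms by (simp add: half_nim_rep_assoc_orbit sum_distrib_left mult.assoc)
  also have "\<dots> = (\<Sum>k\<in>half_idx l. (\<Sum>j\<in>half_idx l. c j * half_fus l i j k) * N k p m)"
    by (subst sum.swap) (simp add: sum_distrib_right)
  finally show ?thesis .
qed

lemma half_nim_rep_top_weight:
  assumes "odd l" "half_nim_rep l M N" "p \<in> M" "m \<in> M"
  defines "v \<equiv> \<lambda>x. \<Sum>j\<in>half_idx l. half_weight l j * N j p x"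
  shows "(\<Sum>x\<in>half_orbit l M N p. N (l - 1) m x * v x) + 2 * (\<Sum>k\<in>half_idx l. N k p m) = 2 * v m"
proof -
  have "(\<Sum>x\<in>half_orbit l M N p. N (l - 1) m x * v x) + 2 * (\<Sum>k\<in>half_idx l. N k p m)
      = (\<Sum>k\<in>half_idx l. ((\<Sum>j\<in>half_idx l. half_weight l j * half_fus l (l - 1) j k) + 2) * N k p m)"
    unfolding v_def half_nim_rep_act_combination[OF assms(2) top_in_half_idx[OF assms(1)] assms(3,4)]
    by (simp add: sum.distrib distrib_right sum_distrib_left) (simp add: mult_2 sum.distrib)
  also have "\<dots> = 2 * v m"
    using half_weight_top_fus[OF assms(1)] by (simp add: v_def sum_distrib_left mult.assoc)
  finally show ?thesis .
qed

theorem proposition3p32: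
  fixes l :: nat and M :: "'m set" and N :: "nat \<Rightarrow> 'm \<Rightarrow> 'm \<Rightarrow> nat"
  assumes "odd l" and "l \<ge> 3" and "half_nim_rep l M N"
    and "p \<in> M" and "q \<in> M"
  shows "N (l - 1) p q \<le> 1"
proof (rule ccontr)
  assume "\<not> N (l - 1) p q \<le> 1"
  then have two: "2 \<le> N (l - 1) p q" by simp
  define v where "v x = (\<Sum>j\<in>half_idx l. half_weight l j * N j p x)" for x
  define T where "T m = (\<Sum>x\<in>half_orbit l M N p. N (l - 1) m x * v x)" for m
  have fin: "finite (half_orbit l M N p)" using assms(3,4) by (rule finite_half_orbit)
  have unit: "N 0 p p = 1" using half_nim_rep_unit[OF assms(3,4,4)] by simp
  have p_orbit: "p \<in> half_orbit l M N p"
    using assms(4) unit zero_in_half_idx unfolding half_orbit_def by force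
  have q_orbit: "q \<in> half_orbit l M N p"
    using assms(1,5) two top_in_half_idx unfolding half_orbit_def by force
  have "N (l - 1) p q * v q \<le> T p"
    unfolding T_def by (rule member_le_sum[OF q_orbit]) (simp_all add: fin)
  then have "2 * v q \<le> T p"
    using two by (meson le_trans mult_le_mono1)
  moreover have "N (l - 1) q p * v p \<le> T q"
    unfolding T_def by (rule member_le_sum[OF p_orbit]) (simp_all add: fin)
  then have "2 * v p \<le> T q"
    using two half_nim_rep_sym[OF assms(3) top_in_half_idx[OF assms(1)] assms(5,4)]
    by (metis le_trans mult_le_mono1)
  moreover have "N 0 p p \<le> (\<Sum>k\<in>half_idx l. N k p p)"
    by (rule member_le_sum[OF zero_in_half_idx]) (simp_all add: finite_half_idx)
  ultimately show False
    using unit half_nim_rep_top_weight[OF assms(1,3,4), of p] half_nim_rep_top_weight[OF assms(1,3,4), of q]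
      assms(4,5) unfolding T_def v_def by linarith
qed

end
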